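(* Let $A$ be a meet-complemented lattice in which $\Box x$ and $\Diamond x$ exist for every $x\in A$. Then for every $a\in A$: (i) $\Diamond a\le\neg\Box\neg a$; (ii) $\neg\Diamond a=\Box\neg a$; (iii) $\neg\neg\Diamond a=\neg\Box\neg a$; (iv) $\Box\neg\neg a=\neg\Diamond\neg a$; (v) $\Diamond\neg a\le\neg\Box a$; (vi) $\Box a\le\neg\Diamond\neg a$; (vii) $\neg\Diamond\neg a\le\Box\Diamond a$; (viii) $\Box\neg a\le\neg\Box\Diamond a$; (ix) $\Box\Diamond a\le\neg\Box\neg a$; (x) $\Diamond\neg\Box\neg a=\Diamond\Diamond a$.
   Context: A meet-complemented lattice is a lattice $(L,\le)$ (not necessarily distributive) such that for every $a\in L$ the element $\neg a=\max\{b\in L: a\wedge b\le c\ \text{for all } c\in L\}$ exists; it is bounded with bottom $0$ and top $1$. For $a\in L$, $\Box a=\max\{b\in L: a\vee\neg b=1\}$ and $\Diamond a=\min\{b\in L: \neg a\vee b=1\}$. *)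

theory Defs
  imports Main
begin

definition is_max :: "'a::order set \<Rightarrow> 'a \<Rightarrow> bool" where
  "is_max S m \<longleftrightarrow> m \<in> S \<and> (\<forall>x\<in>S. x \<le> m)"

definition is_min :: "'a::order set \<Rightarrow> 'a \<Rightarrow> bool" where
  "is_min S m \<longleftrightarrow> m \<in> S \<and> (\<forall>x\<in>S. m \<le> x)"

definition neg :: "'a::bounded_lattice \<Rightarrow> 'a" where
  "neg a = (THE m. is_max {b. \<forall>c. inf a b \<le> c} m)"

definition meet_complemented :: "'a::bounded_lattice itself \<Rightarrow> bool" where
  "meet_complemented _ \<longleftrightarrow> (\<forall>a::'a. \<exists>m. is_max {b. \<forall>c. inf a b \<le> c} m)"

definition box :: "'a::bounded_lattice \<Rightarrow> 'a" where
  "box a = (THE m. is_max {b. sup a (neg b) = top} m)"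

definition diamond :: "'a::bounded_lattice \<Rightarrow> 'a" where
  "diamond a = (THE m. is_min {b. sup (neg a) b = top} m)"

end

theory Submission
  imports Defs
begin

text \<open>Negation satisfies \<open>b \<le> \<not>a \<longleftrightarrow> a \<sqinter> b = 0\<close>, so it is an antitone Galois
connection with itself: \<open>\<not>\<not>\<close> is a closure operator and \<open>\<not>\<not>\<not> = \<not>\<close>. The key
fact is that \<open>\<not>x \<squnion> y = 1\<close> forces \<open>x \<le> \<not>\<not>y\<close>, because \<open>\<not>(x \<sqinter> \<not>y)\<close>
lies above both \<open>\<not>x\<close> and \<open>y\<close>. Comparing the extremal properties of \<open>\<box>\<close> and \<open>\<diamond>\<close>
with it gives \<open>\<not>\<diamond>x = \<box>\<not>x\<close>, from which the remaining items follow by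
antitonicity of \<open>\<not>\<close>.\<close>

lemma is_max_unique: "is_max S m \<Longrightarrow> is_max S m' \<Longrightarrow> m = m'"
  unfolding is_max_def by (meson order_antisym)

lemma is_min_unique: "is_min S m \<Longrightarrow> is_min S m' \<Longrightarrow> m = m'"
  unfolding is_min_def by (meson order_antisym)

lemma is_max_The: "\<exists>m. is_max S m \<Longrightarrow> is_max S (THE m. is_max S m)"
  by (metis is_max_unique theI)

lemma is_min_The: "\<exists>m. is_min S m \<Longrightarrow> is_min S (THE m. is_min S m)"
  by (metis is_min_unique theI)

lemma sup_eq_top_mono: "sup x y = top \<Longrightarrow> x \<le> x' \<Longrightarrow> y \<le> y' \<Longrightarrow> sup x' y' = top"
  for x y x' y' :: "'a::bounded_lattice"
  by (metis sup.mono top_unique)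

context
  assumes mc: "meet_complemented TYPE('a::bounded_lattice)"
begin

lemma is_max_neg: "is_max {b. \<forall>c. inf a b \<le> c} (neg a)" for a :: 'a
  unfolding neg_def using mc unfolding meet_complemented_def by (blast intro: is_max_The)

lemma le_neg_iff: "b \<le> neg a \<longleftrightarrow> inf a b = bot" for a b :: 'a
proof
  assume "b \<le> neg a"
  hence "inf a b \<le> inf a (neg a)" by (rule inf_mono[OF order_refl])
  also have "inf a (neg a) \<le> bot" using is_max_neg[of a] unfolding is_max_def by blast
  finally show "inf a b = bot" by (rule bot_unique[THEN iffD1])
next
  assume "inf a b = bot"
  hence "b \<in> {b. \<forall>c. inf a b \<le> c}" by auto
  thus "b \<le> neg a" using is_max_neg[of a] unfolding is_max_def by blast
qed

lemma inf_neg_self: "inf a (neg a) = bot" for a :: 'a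
  using le_neg_iff by blast

lemma le_neg_commute: "b \<le> neg a \<longleftrightarrow> a \<le> neg b" for a b :: 'a
  by (simp add: le_neg_iff inf_commute)

lemma le_neg_neg: "x \<le> neg (neg x)" for x :: 'a
  using le_neg_commute[of "neg x" x] by blast

lemma neg_antimono: "x \<le> y \<Longrightarrow> neg y \<le> neg x" for x y :: 'a
  by (rule le_neg_commute[THEN iffD2], erule order_trans[OF _ le_neg_neg])

lemma neg_neg_neg: "neg (neg (neg x)) = neg x" for x :: 'a
  by (rule antisym[OF neg_antimono[OF le_neg_neg] le_neg_neg])

lemma le_neg_neg_if_sup_neg_eq_top:
  fixes x y :: 'a
  assumes "sup (neg x) y = top"
  shows "x \<le> neg (neg y)"
proof -
  define z where "z = inf x (neg y)"
  have "neg x \<le> neg z" unfolding z_def by (rule neg_antimono) simp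
  moreover have "y \<le> neg z"
    by (rule le_neg_commute[THEN iffD2]) (simp add: z_def)
  ultimately have "sup (neg z) (neg z) = top" using sup_eq_top_mono[OF assms] by blast
  hence "z = bot" using inf_neg_self[of z] by simp
  hence "inf (neg y) x = bot" by (simp add: z_def inf_commute)
  thus ?thesis by (rule le_neg_iff[THEN iffD2])
qed

lemma diamond_neg_neg: "diamond (neg (neg x)) = diamond x" for x :: 'a
  unfolding diamond_def by (simp add: neg_neg_neg)

context
  assumes box_ex: "\<forall>x::'a. \<exists>m. is_max {b. sup x (neg b) = top} m"
    and diamond_ex: "\<forall>x::'a. \<exists>m. is_min {b. sup (neg x) b = top} m"
begin

lemma is_max_box: "is_max {b. sup x (neg b) = top} (box x)" for x :: 'a
  unfolding box_def using box_ex by (blast intro: is_max_The)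

lemma is_min_diamond: "is_min {b. sup (neg x) b = top} (diamond x)" for x :: 'a
  unfolding diamond_def using diamond_ex by (blast intro: is_min_The)

lemma sup_neg_box_eq_top: "sup x (neg (box x)) = top" for x :: 'a
  using is_max_box unfolding is_max_def by simp

lemma le_boxI: "sup x (neg b) = top \<Longrightarrow> b \<le> box x" for x b :: 'a
  using is_max_box unfolding is_max_def by simp

lemma sup_neg_diamond_eq_top: "sup (neg x) (diamond x) = top" for x :: 'a
  using is_min_diamond unfolding is_min_def by simp

lemma diamond_leI: "sup (neg x) b = top \<Longrightarrow> diamond x \<le> b" for x b :: 'a
  using is_min_diamond unfolding is_min_def by simp

lemma diamond_le_neg_box_neg: "diamond x \<le> neg (box (neg x))" for x :: 'a
  by (rule diamond_leI, rule sup_neg_box_eq_top)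

lemma neg_diamond: "neg (diamond x) = box (neg x)" for x :: 'a
proof (rule antisym)
  show "neg (diamond x) \<le> box (neg x)"
    by (rule le_boxI, rule sup_eq_top_mono[OF sup_neg_diamond_eq_top order_refl le_neg_neg])
  show "box (neg x) \<le> neg (diamond x)"
    by (rule le_neg_commute[THEN iffD1, OF diamond_le_neg_box_neg])
qed

lemma diamond_neg_le_neg_box: "diamond (neg x) \<le> neg (box x)" for x :: 'a
  by (rule diamond_leI, rule sup_eq_top_mono[OF sup_neg_box_eq_top le_neg_neg order_refl])

lemma box_le_neg_diamond_neg: "box x \<le> neg (diamond (neg x))" for x :: 'a
  by (rule le_neg_commute[THEN iffD1, OF diamond_neg_le_neg_box])

lemma neg_diamond_neg_le_box_diamond: "neg (diamond (neg x)) \<le> box (diamond x)" for x :: 'a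
proof (rule le_boxI)
  have "neg x \<le> neg (neg (diamond (neg x)))"
    by (rule le_neg_neg_if_sup_neg_eq_top, rule sup_neg_diamond_eq_top)
  hence "sup (neg (neg (diamond (neg x)))) (diamond x) = top"
    by (rule sup_eq_top_mono[OF sup_neg_diamond_eq_top _ order_refl])
  thus "sup (diamond x) (neg (neg (diamond (neg x)))) = top"
    by (simp only: sup_commute)
qed

lemma box_diamond_le_neg_box_neg: "box (diamond x) \<le> neg (box (neg x))" for x :: 'a
proof -
  have "box (diamond x) \<le> neg (neg (diamond x))"
    using sup_neg_box_eq_top[of "diamond x"] by (simp add: le_neg_neg_if_sup_neg_eq_top sup_commute)
  thus ?thesis by (simp add: neg_diamond)
qed

lemma box_neg_le_neg_box_diamond: "box (neg x) \<le> neg (box (diamond x))" for x :: 'a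
  by (rule le_neg_commute[THEN iffD1, OF box_diamond_le_neg_box_neg])

end

end

theorem proposition9:
  fixes a :: "'a::bounded_lattice"
  assumes mc: "meet_complemented TYPE('a)"
    and box_ex: "\<forall>x::'a. \<exists>m. is_max {b. sup x (neg b) = top} m"
    and dia_ex: "\<forall>x::'a. \<exists>m. is_min {b. sup (neg x) b = top} m"
  shows "(diamond a \<le> neg (box (neg a))) \<and>
         (neg (diamond a) = box (neg a)) \<and>
         (neg (neg (diamond a)) = neg (box (neg a))) \<and>
         (box (neg (neg a)) = neg (diamond (neg a))) \<and>
         (diamond (neg a) \<le> neg (box a)) \<and>
         (box a \<le> neg (diamond (neg a))) \<and>
         (neg (diamond (neg a)) \<le> box (diamond a)) \<and>
         (box (neg a) \<le> neg (box (diamond a))) \<and>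
         (box (diamond a) \<le> neg (box (neg a))) \<and>
         (diamond (neg (box (neg a))) = diamond (diamond a))"
proof -
  note neg_diamond = neg_diamond[OF mc box_ex dia_ex]
  have "neg (neg (diamond a)) = neg (box (neg a))"
    unfolding neg_diamond ..
  moreover have "diamond (neg (box (neg a))) = diamond (diamond a)"
    unfolding neg_diamond[symmetric] by (rule diamond_neg_neg[OF mc])
  ultimately show ?thesis
    using neg_diamond[of a] neg_diamond[of "neg a", symmetric]
      diamond_le_neg_box_neg[OF mc box_ex dia_ex]
      diamond_neg_le_neg_box[OF mc box_ex dia_ex]
      box_le_neg_diamond_neg[OF mc box_ex dia_ex]
      neg_diamond_neg_le_box_diamond[OF mc box_ex dia_ex]
      box_neg_le_neg_box_diamond[OF mc box_ex dia_ex]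
      box_diamond_le_neg_box_neg[OF mc box_ex dia_ex]
    by blast
qed

end
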